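(* Let $A$ be an independent set of the matroid $\mathcal M$ and let $V$ be an independent set of the contracted matroid $\mathcal M/A$. Then $$\sum_{i\in V}b_i(A)\ \le\ \mathbb{E}_{\hat{\mathbf v}}[R(A,\hat{\mathbf v})].$$
   Context: Matroid $\mathcal M=([n],\mathcal I)$; $\hat{\mathbf v}=(\hat v_1,\dots,\hat v_n)$ is a random vector of nonnegative values with independent coordinates. For an independent set $A$, $\mathrm{Opt}(\hat{\mathbf v}\mid A)\subseteq[n]\setminus A$ is a maximum-value independent set of the contracted matroid $\mathcal M/A$ with weights $\hat{\mathbf v}$, $R(A,\hat{\mathbf v})=\sum_{i\in\mathrm{Opt}(\hat{\mathbf v}\mid A)}\hat v_i$ (with $R(A\cup\{i\},\hat{\mathbf v})$ defined analogously when $A\cup\{i\}$ is independent), and $b_i(A)=\mathbb{E}_{\hat{\mathbf v}}[R(A,\hat{\mathbf v})-R(A\cup\{i\},\hat{\mathbf v})]$. *)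

theory Defs
  imports "HOL-Probability.Probability"
begin

definition matroid :: "'a set \<Rightarrow> ('a set \<Rightarrow> bool) \<Rightarrow> bool" where
  "matroid E indep \<longleftrightarrow>
     finite E \<and>
     (\<forall>X. indep X \<longrightarrow> X \<subseteq> E) \<and>
     indep {} \<and>
     (\<forall>X Y. indep Y \<and> X \<subseteq> Y \<longrightarrow> indep X) \<and>
     (\<forall>X Y. indep X \<and> indep Y \<and> card X < card Y \<longrightarrow>
        (\<exists>y \<in> Y - X. indep (insert y X)))"

text \<open>Independent sets of the contraction M/A (A independent in M).\<close>
definition contr_indep :: "'a set \<Rightarrow> ('a set \<Rightarrow> bool) \<Rightarrow> 'a set \<Rightarrow> 'a set \<Rightarrow> bool" where
  "contr_indep E indep A S \<longleftrightarrow> S \<subseteq> E - A \<and> indep (A \<union> S)"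

text \<open>R(A,v): value of a maximum-weight independent set Opt(v|A) of M/A.\<close>
definition opt_val :: "'a set \<Rightarrow> ('a set \<Rightarrow> bool) \<Rightarrow> 'a set \<Rightarrow> ('a \<Rightarrow> real) \<Rightarrow> real" where
  "opt_val E indep A v = Max ((\<lambda>S. \<Sum>i\<in>S. v i) ` {S. contr_indep E indep A S})"

text \<open>b_i(A) = E[R(A,v) - R(A+i,v)] (a nonnegative quantity, taken in [0,\<infinity>]).\<close>
definition bval :: "'a set \<Rightarrow> ('a set \<Rightarrow> bool) \<Rightarrow> ('a \<Rightarrow> real) measure \<Rightarrow> 'a set \<Rightarrow> 'a \<Rightarrow> ennreal" where
  "bval E indep P A i =
     (\<integral>\<^sup>+ v. ennreal (opt_val E indep A v - opt_val E indep (insert i A) v) \<partial>P)"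

end

theory Submission
  imports Defs
begin

text \<open>For every realisation v, R(A,v) is supermodular in A: from optimal solutions J of M/(A+i+k)
  and J0 of M/A, moving at most one element of J0 over to J (chosen on the circuit of k in A \<union> J0)
  yields feasible solutions of M/(A+i) and M/(A+k) with the same total value. Hence the marginal
  losses R(A,v) - R(A+i,v) grow with A, their sum over V telescopes to at most
  R(A,v) - R(A \<union> V,v) \<le> R(A,v), and integrating gives the claim. Since the bound holds
  pointwise, independence of the coordinates and nonnegativity of the values are never used.\<close>

lemma matroid_finite_ground: "matroid E ind \<Longrightarrow> finite E"
  by (simp add: matroid_def)

lemma matroid_indep_subset_ground: "matroid E ind \<Longrightarrow> ind X \<Longrightarrow> X \<subseteq> E"
  by (simp add: matroid_def)

lemma matroid_indep_finite: "matroid E ind \<Longrightarrow> ind X \<Longrightarrow> finite X"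
  using matroid_finite_ground matroid_indep_subset_ground finite_subset by metis

lemma matroid_indep_mono: "matroid E ind \<Longrightarrow> ind Y \<Longrightarrow> X \<subseteq> Y \<Longrightarrow> ind X"
  unfolding matroid_def by blast

lemma matroid_augment:
  "matroid E ind \<Longrightarrow> ind X \<Longrightarrow> ind Y \<Longrightarrow> card X < card Y \<Longrightarrow> \<exists>y\<in>Y - X. ind (insert y X)"
  by (simp add: matroid_def)

lemma matroid_extend_max_card:
  assumes M: "matroid E ind" and I: "ind I" "I \<subseteq> S"
  obtains B where "I \<subseteq> B" "B \<subseteq> S" "ind B" "\<And>Y. Y \<subseteq> S \<Longrightarrow> ind Y \<Longrightarrow> card Y \<le> card B"
proof -
  define F where "F = {B. I \<subseteq> B \<and> B \<subseteq> S \<and> ind B}"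
  have "card B < Suc (card E)" if "B \<in> F" for B
    using that matroid_indep_subset_ground[OF M] matroid_finite_ground[OF M]
    by (auto simp: F_def intro: card_mono le_imp_less_Suc)
  moreover have "I \<in> F" using I by (auto simp: F_def)
  ultimately obtain B where B: "B \<in> F" "\<And>B'. B' \<in> F \<Longrightarrow> card B' \<le> card B"
    using Lattices_Big.ex_has_greatest_nat[of "\<lambda>B. B \<in> F" I card] by blast
  have "card Y \<le> card B" if Y: "Y \<subseteq> S" "ind Y" for Y
  proof (rule ccontr)
    assume "\<not> card Y \<le> card B"
    then obtain y where y: "y \<in> Y - B" "ind (insert y B)"
      using matroid_augment[OF M, of B Y] B(1) Y by (auto simp: F_def)
    with Y B(1) have "card (insert y B) \<le> card B"
      by (intro B(2)) (auto simp: F_def)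
    moreover have "finite B" using matroid_indep_finite[OF M] B(1) by (auto simp: F_def)
    ultimately show False using y by simp
  qed
  with B(1) that show ?thesis by (auto simp: F_def)
qed

text \<open>The set of q below is the circuit of insert k Q with k removed.\<close>
lemma matroid_dependent_insert_exchangeable:
  assumes M: "matroid E ind" and Q: "ind Q" and dep: "\<not> ind (insert k Q)"
  shows "\<not> ind (insert k {q\<in>Q. ind (insert k (Q - {q}))})"
proof
  define C where "C = {q\<in>Q. ind (insert k (Q - {q}))}"
  assume "ind (insert k {q\<in>Q. ind (insert k (Q - {q}))})"
  hence kC: "ind (insert k C)" by (simp add: C_def)
  have kQ: "k \<notin> Q" using Q dep by (auto simp: insert_absorb)
  obtain B where B: "insert k C \<subseteq> B" "B \<subseteq> insert k Q" "ind B"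
    "\<And>Y. Y \<subseteq> insert k Q \<Longrightarrow> ind Y \<Longrightarrow> card Y \<le> card B"
    using matroid_extend_max_card[OF M kC, of "insert k Q"] by (auto simp: C_def)
  have "B \<noteq> insert k Q" using B(3) dep by auto
  then obtain q where q: "q \<in> Q" "q \<notin> B" using B(1,2) by auto
  have finQ: "finite Q" using matroid_indep_finite[OF M Q] .
  have "card (insert k (Q - {q})) = card Q"
    using finQ q kQ by (simp add: card_Diff_singleton_if) (metis Suc_pred card_gt_0_iff empty_iff)
  moreover have "card Q \<le> card B" using B(4) Q by auto
  moreover have "B \<subseteq> insert k (Q - {q})" using B(2) q by auto
  ultimately have "B = insert k (Q - {q})"
    using card_seteq finQ by (metis finite.insertI finite_Diff)
  hence "q \<in> C" using B(3) q by (simp add: C_def)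
  thus False using B(1) q by auto
qed

lemma matroid_indep_insert_if_spanned:
  assumes M: "matroid E ind" and C: "ind C" and kZ: "ind (insert k Z)" "k \<notin> Z"
    and spanned: "\<And>c. c \<in> C - Z \<Longrightarrow> \<not> ind (insert c Z)"
  shows "ind (insert k C)"
proof -
  have Z: "ind Z" using matroid_indep_mono[OF M kZ(1)] by blast
  obtain B' where B': "Z \<subseteq> B'" "B' \<subseteq> Z \<union> C" "ind B'"
    "\<And>Y. Y \<subseteq> Z \<union> C \<Longrightarrow> ind Y \<Longrightarrow> card Y \<le> card B'"
    using matroid_extend_max_card[OF M Z, of "Z \<union> C"] by auto
  have "B' = Z"
  proof (rule ccontr)
    assume "B' \<noteq> Z"
    then obtain c where "c \<in> B'" "c \<notin> Z" using B'(1) by auto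
    moreover from this have "ind (insert c Z)"
      using matroid_indep_mono[OF M B'(3)] B'(1) by auto
    ultimately show False using spanned B'(2) by blast
  qed
  obtain B where B: "C \<subseteq> B" "B \<subseteq> Z \<union> C" "ind B"
    "\<And>Y. Y \<subseteq> Z \<union> C \<Longrightarrow> ind Y \<Longrightarrow> card Y \<le> card B"
    using matroid_extend_max_card[OF M C, of "Z \<union> C"] by auto
  have "card B \<le> card Z" using B'(4) B(2,3) \<open>B' = Z\<close> by auto
  moreover have "card (insert k Z) = Suc (card Z)"
    using kZ(2) matroid_indep_finite[OF M Z] by simp
  ultimately obtain y where y: "y \<in> insert k Z - B" "ind (insert y B)"
    using matroid_augment[OF M B(3) kZ(1)] by auto
  have "y \<notin> Z"
  proof
    assume "y \<in> Z"
    hence "card (insert y B) \<le> card B" using B(2,4) y(2) by auto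
    thus False using y matroid_indep_finite[OF M B(3)] by simp
  qed
  hence "y = k" using y by auto
  thus ?thesis using matroid_indep_mono[OF M y(2)] B(1) by blast
qed

lemma matroid_circuit_exchange:
  assumes M: "matroid E ind" and kZ: "ind (insert k Z)" "k \<notin> Z"
    and Q: "ind Q" and dep: "\<not> ind (insert k Q)"
  shows "\<exists>q\<in>Q - Z. ind (insert q Z) \<and> ind (insert k (Q - {q}))"
proof -
  define C where "C = {q\<in>Q. ind (insert k (Q - {q}))}"
  have "\<not> ind (insert k C)"
    unfolding C_def by (rule matroid_dependent_insert_exchangeable[OF M Q dep])
  moreover have "ind C" using matroid_indep_mono[OF M Q] by (auto simp: C_def)
  ultimately obtain c where "c \<in> C - Z" "ind (insert c Z)"
    using matroid_indep_insert_if_spanned[OF M _ kZ] by blast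
  thus ?thesis by (auto simp: C_def)
qed

lemma contr_indep_exchange:
  assumes M: "matroid E ind" and ik: "i \<noteq> k"
    and J: "contr_indep E ind (insert i (insert k A)) J" and J0: "contr_indep E ind A J0"
  shows "\<exists>Ji Jk. contr_indep E ind (insert i A) Ji \<and> contr_indep E ind (insert k A) Jk \<and>
           sum v Ji + sum v Jk = sum v J + sum v J0"
proof -
  have JA: "ind (insert i (insert k (A \<union> J)))" "J \<subseteq> E" "i \<notin> J" "k \<notin> J" "J \<inter> A = {}"
    using J by (auto simp: contr_indep_def)
  have J0A: "ind (A \<union> J0)" "J0 \<subseteq> E" "J0 \<inter> A = {}"
    using J0 by (auto simp: contr_indep_def)
  have finJ: "finite J" "finite J0"
    using JA(2) J0A(2) matroid_finite_ground[OF M] finite_subset by auto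
  have move: "sum v (insert q J) + sum v (J0 - {q}) = sum v J + sum v J0"
    if "q \<in> J0" "q \<notin> J" for q
    using that finJ by (simp add: sum.remove algebra_simps)
  consider (k_in) "k \<in> J0" | (k_free) "k \<notin> J0" "ind (insert k (A \<union> J0))"
    | (k_spanned) "k \<notin> J0" "\<not> ind (insert k (A \<union> J0))"
    by blast
  then show ?thesis
  proof cases
    case k_in
    have "contr_indep E ind (insert i A) (insert k J)"
      using JA J0A k_in ik by (auto simp: contr_indep_def insert_commute)
    moreover have "insert k A \<union> (J0 - {k}) = A \<union> J0" using k_in by auto
    hence "contr_indep E ind (insert k A) (J0 - {k})"
      using J0A k_in by (auto simp: contr_indep_def)
    ultimately show ?thesis using move[OF k_in JA(4)] by blast
  next
    case k_free
    have "contr_indep E ind (insert i A) J"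
      using JA matroid_indep_mono[OF M JA(1), of "insert i A \<union> J"]
      by (auto simp: contr_indep_def)
    moreover have "contr_indep E ind (insert k A) J0"
      using J0A k_free by (auto simp: contr_indep_def)
    ultimately show ?thesis by blast
  next
    case k_spanned
    have "k \<notin> A" using k_spanned(2) J0A(1) by (auto simp: insert_absorb)
    hence "k \<notin> insert i (A \<union> J)" using ik JA(4) by auto
    moreover have "ind (insert k (insert i (A \<union> J)))" using JA(1) by (simp add: insert_commute)
    ultimately obtain q where q: "q \<in> (A \<union> J0) - insert i (A \<union> J)"
      "ind (insert q (insert i (A \<union> J)))" "ind (insert k (A \<union> J0 - {q}))"
      using matroid_circuit_exchange[OF M _ _ J0A(1) k_spanned(2)] by blast
    have "contr_indep E ind (insert i A) (insert q J)"
      using q JA J0A by (auto simp: contr_indep_def insert_commute)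
    moreover have "insert k (A \<union> J0 - {q}) = insert k A \<union> (J0 - {q})" using q(1) by auto
    hence "contr_indep E ind (insert k A) (J0 - {q})"
      using q(3) JA J0A k_spanned(1) \<open>k \<notin> A\<close> by (auto simp: contr_indep_def)
    moreover have "q \<in> J0" "q \<notin> J" using q(1) by auto
    ultimately show ?thesis using move by blast
  qed
qed

lemma finite_contr_indep:
  "matroid E ind \<Longrightarrow> finite {S. contr_indep E ind A S}"
  by (rule finite_subset[of _ "Pow E"]) (auto simp: contr_indep_def dest: matroid_finite_ground)

lemma sum_le_opt_val:
  "matroid E ind \<Longrightarrow> contr_indep E ind A S \<Longrightarrow> sum v S \<le> opt_val E ind A v"
  unfolding opt_val_def by (rule Max_ge) (auto intro: finite_contr_indep)

lemma opt_val_attained: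
  assumes M: "matroid E ind" and A: "ind A"
  obtains J where "contr_indep E ind A J" "opt_val E ind A v = sum v J"
proof -
  have "contr_indep E ind A {}" using A by (simp add: contr_indep_def)
  hence "(\<lambda>S. sum v S) ` {S. contr_indep E ind A S} \<noteq> {}" by blast
  from Max_in[OF finite_imageI[OF finite_contr_indep[OF M]] this] that show ?thesis
    unfolding opt_val_def by auto
qed

lemma opt_val_nonneg:
  "matroid E ind \<Longrightarrow> ind A \<Longrightarrow> 0 \<le> opt_val E ind A v"
  using sum_le_opt_val[of E ind A "{}" v] by (simp add: contr_indep_def)

lemma opt_val_insert_le:
  assumes M: "matroid E ind" and iA: "ind (insert i A)"
  shows "opt_val E ind (insert i A) v \<le> opt_val E ind A v"
proof -
  obtain J where J: "contr_indep E ind (insert i A) J" "opt_val E ind (insert i A) v = sum v J"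
    using opt_val_attained[OF M iA] .
  have "contr_indep E ind A J"
    using J(1) matroid_indep_mono[OF M, of "insert i A \<union> J" "A \<union> J"]
    by (auto simp: contr_indep_def)
  thus ?thesis using J(2) sum_le_opt_val[OF M] by metis
qed

lemma opt_val_supermodular:
  assumes M: "matroid E ind" and I: "ind (insert i (insert k A))" and ik: "i \<noteq> k"
  shows "opt_val E ind A v + opt_val E ind (insert i (insert k A)) v
           \<le> opt_val E ind (insert i A) v + opt_val E ind (insert k A) v"
proof -
  obtain J where J: "contr_indep E ind (insert i (insert k A)) J"
      "opt_val E ind (insert i (insert k A)) v = sum v J"
    using opt_val_attained[OF M I] .
  obtain J0 where J0: "contr_indep E ind A J0" "opt_val E ind A v = sum v J0"
    using opt_val_attained[OF M matroid_indep_mono[OF M I]] by blast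
  obtain Ji Jk where Ji: "contr_indep E ind (insert i A) Ji"
      and Jk: "contr_indep E ind (insert k A) Jk"
      and "sum v Ji + sum v Jk = sum v J + sum v J0"
    using contr_indep_exchange[OF M ik J(1) J0(1)] by blast
  with J(2) J0(2) sum_le_opt_val[OF M Ji, of v] sum_le_opt_val[OF M Jk, of v]
  show ?thesis by linarith
qed

lemma opt_val_marginal_sum_le:
  assumes M: "matroid E ind" and V: "finite V" and AV: "ind (A \<union> V)"
  shows "(\<Sum>i\<in>V. opt_val E ind A v - opt_val E ind (insert i A) v)
           \<le> opt_val E ind A v - opt_val E ind (A \<union> V) v"
  using V AV
proof (induction V arbitrary: A rule: finite_induct)
  case empty
  thus ?case by simp
next
  case (insert x V)
  have "opt_val E ind A v - opt_val E ind (insert i A) v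
          \<le> opt_val E ind (insert x A) v - opt_val E ind (insert i (insert x A)) v"
    if "i \<in> V" for i
  proof -
    have "ind (insert i (insert x A))"
      by (rule matroid_indep_mono[OF M insert.prems]) (use that in auto)
    moreover have "i \<noteq> x" using that insert.hyps(2) by blast
    ultimately show ?thesis using opt_val_supermodular[OF M, of i x A v] by linarith
  qed
  hence "(\<Sum>i\<in>V. opt_val E ind A v - opt_val E ind (insert i A) v)
           \<le> (\<Sum>i\<in>V. opt_val E ind (insert x A) v - opt_val E ind (insert i (insert x A)) v)"
    by (rule sum_mono)
  also have "\<dots> \<le> opt_val E ind (insert x A) v - opt_val E ind (insert x A \<union> V) v"
    using insert.prems by (intro insert.IH) auto
  moreover have "insert x A \<union> V = A \<union> insert x V" by blast
  ultimately show ?case using insert.hyps by simp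
qed

lemma opt_val_borel_measurable:
  assumes M: "matroid E ind" and comp: "\<And>i. i \<in> E \<Longrightarrow> (\<lambda>v. v i) \<in> borel_measurable N"
  shows "opt_val E ind A \<in> borel_measurable N"
  unfolding opt_val_def
proof (rule borel_measurable_Max[OF finite_contr_indep[OF M]])
  fix S assume "S \<in> {S. contr_indep E ind A S}"
  thus "(\<lambda>v. \<Sum>i\<in>S. v i) \<in> borel_measurable N"
    using comp by (intro borel_measurable_sum) (auto simp: contr_indep_def)
qed

theorem lemma7:
  fixes n :: nat
    and indep :: "nat set \<Rightarrow> bool"
    and D :: "nat \<Rightarrow> real measure"
    and A V :: "nat set"
  assumes "matroid {..<n} indep"
    and "\<And>i. i < n \<Longrightarrow> prob_space (D i)"
    and "\<And>i. i < n \<Longrightarrow> sets (D i) = sets borel"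
    and "\<And>i. i < n \<Longrightarrow> (AE x in D i. 0 \<le> x)"
    and "indep A"
    and "contr_indep {..<n} indep A V"
  shows "(\<Sum>i\<in>V. bval {..<n} indep (PiM {..<n} D) A i)
           \<le> (\<integral>\<^sup>+ v. ennreal (opt_val {..<n} indep A v) \<partial>(PiM {..<n} D))"
proof -
  note M = assms(1)
  let ?P = "PiM {..<n} D" and ?R = "\<lambda>B. opt_val {..<n} indep B"
  have "(\<lambda>v. v i) \<in> borel_measurable ?P" if "i \<in> {..<n}" for i
  proof -
    have "(\<lambda>v. v i) \<in> measurable ?P (D i)"
      by (rule measurable_component_singleton[OF that])
    moreover have "measurable ?P (D i) = borel_measurable ?P"
      using measurable_cong_sets[OF refl assms(3)] that by simp
    ultimately show ?thesis by simp
  qed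
  hence meas: "?R B \<in> borel_measurable ?P" for B
    by (rule opt_val_borel_measurable[OF M])
  have AV: "indep (A \<union> V)" "finite V"
    using assms(6) finite_subset by (auto simp: contr_indep_def)
  have loss_nonneg: "0 \<le> ?R A v - ?R (insert i A) v" if "i \<in> V" for i v
    using opt_val_insert_le[OF M, of i A v] matroid_indep_mono[OF M AV(1)] that by auto
  have "(\<Sum>i\<in>V. bval {..<n} indep ?P A i)
          = (\<integral>\<^sup>+ v. (\<Sum>i\<in>V. ennreal (?R A v - ?R (insert i A) v)) \<partial>?P)"
    unfolding bval_def using meas by (intro nn_integral_sum[symmetric]) auto
  also have "\<dots> = (\<integral>\<^sup>+ v. ennreal (\<Sum>i\<in>V. ?R A v - ?R (insert i A) v) \<partial>?P)"
    using loss_nonneg by (intro nn_integral_cong) (simp add: sum_ennreal)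
  also have "\<dots> \<le> (\<integral>\<^sup>+ v. ennreal (?R A v) \<partial>?P)"
  proof (intro nn_integral_mono ennreal_leI)
    fix v
    have "(\<Sum>i\<in>V. ?R A v - ?R (insert i A) v) \<le> ?R A v - ?R (A \<union> V) v"
      by (rule opt_val_marginal_sum_le[OF M AV(2,1)])
    thus "(\<Sum>i\<in>V. ?R A v - ?R (insert i A) v) \<le> ?R A v"
      using opt_val_nonneg[OF M AV(1), of v] by linarith
  qed
  finally show ?thesis .
qed

end
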